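(* Let $a=\{a_1,\dots,a_m\}$ be a set of positive integers and $n\ge 0$. Then there exist a polynomial $P(k)\in\mathbb{Q}[k]$ of degree $n$ and an integer $N$ such that for every integer $k\ge N$ the number of $n$-element independent sets of $F(a,k)$ equals $P(k)$.
   Context: For a set $a=\{a_1,\dots,a_m\}$ of positive integers and a positive integer $k$, $F(a,k)$ is the simple graph with vertex set $\mathbb{Z}/k\mathbb{Z}$ in which distinct vertices $i,j$ are adjacent if and only if $i-j\equiv a_r\pmod k$ or $j-i\equiv a_r\pmod k$ for some $1\le r\le m$. An independent set is a set of vertices no two of which are adjacent. *)

theory Defs
  imports Main "HOL-Computational_Algebra.Polynomial"
begin

text \<open>The circulant graph F(a,k): vertex set Z/kZ, represented by {0..<k}.
  Distinct vertices i, j are adjacent iff i - j or j - i is congruent to some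
  element of a modulo k.\<close>

definition F_adj :: "int set \<Rightarrow> int \<Rightarrow> int \<Rightarrow> int \<Rightarrow> bool" where
  "F_adj a k i j \<longleftrightarrow> i \<noteq> j \<and>
     (\<exists>r\<in>a. (i - j) mod k = r mod k \<or> (j - i) mod k = r mod k)"

definition F_vertices :: "int \<Rightarrow> int set" where
  "F_vertices k = {0..<k}"

definition F_independent :: "int set \<Rightarrow> int \<Rightarrow> int set \<Rightarrow> bool" where
  "F_independent a k S \<longleftrightarrow> S \<subseteq> F_vertices k \<and>
     (\<forall>i\<in>S. \<forall>j\<in>S. \<not> F_adj a k i j)"

definition num_indep :: "int set \<Rightarrow> int \<Rightarrow> nat \<Rightarrow> nat" where
  "num_indep a k n = card {S. F_independent a k S \<and> card S = n}"

end

(*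
  Rotating the cycle gives  n * num_indep a k n = k * h(k),  where h(k) counts the n-element
  independent sets containing 0.  Such a set is determined by its cyclic gap sequence, a
  composition of k into n positive parts, and it is independent iff no sum of cyclically
  consecutive gaps (the distance between two of its points, measured either way round) lies in a.
  Let M = max a and k > M.  A gap exceeding M cannot occur in a segment whose sum lies in a, so
  independence only depends on the type of the composition: gaps up to M are recorded, larger
  ones are forgotten.  There are finitely many types, and by stars and bars the compositions of a
  type with j forgotten gaps are counted, for large k, by a binomial coefficient that is a
  polynomial of degree j - 1 in k.  Only the type with all gaps forgotten has j = n, so h is
  eventually a polynomial of degree n - 1, and num_indep a k n = k * h(k) / n has degree n.
*)

theory Submission
  imports Defs
begin

definition indep_sets_containing :: "int set \<Rightarrow> int \<Rightarrow> nat \<Rightarrow> int \<Rightarrow> int set set" where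
  "indep_sets_containing a k n x = {S. F_independent a k S \<and> card S = n \<and> x \<in> S}"

lemma F_independent_subset: "F_independent a k S \<Longrightarrow> S \<subseteq> {0..<k}"
  by (simp add: F_independent_def F_vertices_def)

definition rotate_set :: "int \<Rightarrow> int \<Rightarrow> int set \<Rightarrow> int set" where
  "rotate_set k t S = (\<lambda>y. (y + t) mod k) ` S"

lemma inj_on_rotate: "inj_on (\<lambda>y. (y + t) mod k) {0..<k::int}"
proof (rule inj_onI)
  fix x y :: int
  assume "x \<in> {0..<k}" "y \<in> {0..<k}" and "(x + t) mod k = (y + t) mod k"
  then have "((x + t) mod k - t) mod k = ((y + t) mod k - t) mod k" by simp
  then show "x = y" using \<open>x \<in> {0..<k}\<close> \<open>y \<in> {0..<k}\<close> by (simp add: mod_diff_left_eq)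
qed

lemma rotate_set_inverse:
  assumes "S \<subseteq> {0..<k}"
  shows "rotate_set k (- t) (rotate_set k t S) = S"
proof -
  have "((y + t) mod k + - t) mod k = y" if "y \<in> S" for y
    using assms that by (auto simp: mod_diff_left_eq)
  then show ?thesis
    by (force simp: rotate_set_def image_image)
qed

lemma card_rotate_set: "S \<subseteq> {0..<k} \<Longrightarrow> card (rotate_set k t S) = card S"
  unfolding rotate_set_def by (rule card_image) (rule inj_on_subset[OF inj_on_rotate])

lemma F_adj_rotate:
  assumes "i \<in> {0..<k}" "j \<in> {0..<k}"
  shows "F_adj a k ((i + t) mod k) ((j + t) mod k) \<longleftrightarrow> F_adj a k i j"
proof -
  have "(i + t) mod k = (j + t) mod k \<longleftrightarrow> i = j"
    using inj_on_rotate[of t k] assms by (auto dest: inj_onD)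
  moreover have "((i + t) mod k - (j + t) mod k) mod k = (i - j) mod k"
    and "((j + t) mod k - (i + t) mod k) mod k = (j - i) mod k"
    by (simp_all add: mod_diff_eq)
  ultimately show ?thesis unfolding F_adj_def by simp
qed

lemma F_independent_rotate_set:
  assumes "F_independent a k S"
  shows "F_independent a k (rotate_set k t S)"
proof -
  have S: "S \<subseteq> {0..<k}" using F_independent_subset[OF assms] .
  then have "0 < k \<or> S = {}" by fastforce
  moreover have "\<not> F_adj a k ((i + t) mod k) ((j + t) mod k)" if "i \<in> S" "j \<in> S" for i j
    using F_adj_rotate[of i k j a t] S that assms by (auto simp: F_independent_def subset_iff)
  ultimately show ?thesis
    unfolding F_independent_def F_vertices_def rotate_set_def by auto
qed

lemma rotate_set_in_indep_sets_containing:
  assumes "S \<in> indep_sets_containing a k n y" "x = (y + t) mod k"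
  shows "rotate_set k t S \<in> indep_sets_containing a k n x"
  using assms F_independent_rotate_set card_rotate_set[OF F_independent_subset]
  unfolding indep_sets_containing_def rotate_set_def by auto

lemma card_indep_sets_containing:
  assumes "x \<in> {0..<k}"
  shows "card (indep_sets_containing a k n x) = card (indep_sets_containing a k n 0)"
proof (rule bij_betw_same_card[symmetric], rule bij_betw_byWitness[where f' = "rotate_set k (- x)"])
  show "rotate_set k x ` indep_sets_containing a k n 0 \<subseteq> indep_sets_containing a k n x"
    using rotate_set_in_indep_sets_containing[of _ a k n 0 x x] assms by auto
  show "rotate_set k (- x) ` indep_sets_containing a k n x \<subseteq> indep_sets_containing a k n 0"
    using rotate_set_in_indep_sets_containing[of _ a k n x 0 "- x"] by auto
  show "\<forall>S\<in>indep_sets_containing a k n 0. rotate_set k (- x) (rotate_set k x S) = S"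
    using rotate_set_inverse[OF F_independent_subset, of a k _ x]
    by (simp add: indep_sets_containing_def)
  show "\<forall>S\<in>indep_sets_containing a k n x. rotate_set k x (rotate_set k (- x) S) = S"
    using rotate_set_inverse[OF F_independent_subset, of a k _ "- x"]
    by (simp add: indep_sets_containing_def)
qed

lemma num_indep_rotation: "n * num_indep a k n = nat k * card (indep_sets_containing a k n 0)"
proof -
  define X where "X = {S. F_independent a k S \<and> card S = n}"
  have "finite X"
    by (rule finite_subset[of _ "Pow {0..<k}"]) (auto simp: X_def dest: F_independent_subset)
  moreover have "\<forall>S\<in>X. card {x \<in> {0..<k}. x \<in> S} = n"
  proof
    fix S assume "S \<in> X"
    then have "{x \<in> {0..<k}. x \<in> S} = S" "card S = n"
      using F_independent_subset[of a k S] by (auto simp: X_def)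
    then show "card {x \<in> {0..<k}. x \<in> S} = n" by simp
  qed
  ultimately have "(\<Sum>x\<in>{0..<k}. card {S \<in> X. x \<in> S}) = n * card X"
    by (intro sum_multicount) auto
  also have "(\<Sum>x\<in>{0..<k}. card {S \<in> X. x \<in> S})
           = (\<Sum>x\<in>{0..<k}. card (indep_sets_containing a k n 0))"
  proof (rule sum.cong[OF refl])
    fix x assume "x \<in> {0..<k}"
    have "{S \<in> X. x \<in> S} = indep_sets_containing a k n x"
      by (auto simp: X_def indep_sets_containing_def)
    then show "card {S \<in> X. x \<in> S} = card (indep_sets_containing a k n 0)"
      using card_indep_sets_containing[OF \<open>x \<in> {0..<k}\<close>] by simp
  qed
  finally show ?thesis by (simp add: X_def num_indep_def)
qed

definition compositions :: "nat \<Rightarrow> int \<Rightarrow> int list set" where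
  "compositions n k = {gs. length gs = n \<and> (\<forall>g\<in>set gs. 0 < g) \<and> sum_list gs = k}"

definition partial_sum :: "int list \<Rightarrow> nat \<Rightarrow> int" where
  "partial_sum gs j = sum_list (take j gs)"

definition points :: "int list \<Rightarrow> int set" where
  "points gs = partial_sum gs ` {..<length gs}"

definition gaps :: "int \<Rightarrow> int set \<Rightarrow> int list" where
  "gaps k S = (let xs = sorted_list_of_set S @ [k] in map (\<lambda>j. xs ! Suc j - xs ! j) [0..<card S])"

definition pointed_subsets :: "nat \<Rightarrow> int \<Rightarrow> int set set" where
  "pointed_subsets n k = {S. S \<subseteq> {0..<k} \<and> card S = n \<and> 0 \<in> S}"

lemma partial_sum_eq_sum: "j \<le> length gs \<Longrightarrow> partial_sum gs j = (\<Sum>l<j. gs ! l)"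
  by (simp add: partial_sum_def sum_list_sum_nth atLeast0LessThan min_absorb2)

lemma partial_sum_diff:
  assumes "i \<le> j" "j \<le> length gs"
  shows "partial_sum gs j - partial_sum gs i = (\<Sum>l\<in>{i..<j}. gs ! l)"
proof -
  have "(\<Sum>l\<in>{0..<i}. gs ! l) + (\<Sum>l\<in>{i..<j}. gs ! l) = (\<Sum>l\<in>{0..<j}. gs ! l)"
    by (rule sum.atLeastLessThan_concat) (use assms in auto)
  then show ?thesis
    using assms by (simp add: partial_sum_eq_sum atLeast0LessThan)
qed

lemma partial_sum_Suc: "j < length gs \<Longrightarrow> partial_sum gs (Suc j) = partial_sum gs j + gs ! j"
  using partial_sum_diff[of j "Suc j" gs] by simp

lemma partial_sum_less:
  assumes "\<forall>g\<in>set gs. 0 < g" "i < j" "j \<le> length gs"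
  shows "partial_sum gs i < partial_sum gs j"
proof -
  have "0 < (\<Sum>l\<in>{i..<j}. gs ! l)"
    using assms by (intro sum_pos) auto
  then show ?thesis using partial_sum_diff[of i j gs] assms by simp
qed

lemma partial_sum_differences:
  assumes "j \<le> n"
  shows "partial_sum (map (\<lambda>i. xs ! Suc i - xs ! i) [0..<n]) j = xs ! j - xs ! 0"
  using assms
proof (induction j)
  case (Suc j)
  then show ?case using partial_sum_Suc[of j "map (\<lambda>i. xs ! Suc i - xs ! i) [0..<n]"] by simp
qed (simp add: partial_sum_def)

lemma sorted_list_of_set_points:
  assumes "\<forall>g\<in>set gs. 0 < g"
  shows "sorted_list_of_set (points gs) = map (partial_sum gs) [0..<length gs]"
proof -
  have "sorted_wrt (<) (map (partial_sum gs) [0..<length gs])"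
    unfolding sorted_wrt_iff_nth_less using partial_sum_less[OF assms] by auto
  moreover have "points gs = set (map (partial_sum gs) [0..<length gs])"
    by (auto simp: points_def)
  ultimately show ?thesis
    by (metis sorted_list_of_set_sort_remdups strict_sorted_iff distinct_remdups_id sorted_sort_id)
qed

lemma gaps_points:
  assumes "gs \<in> compositions n k"
  shows "gaps k (points gs) = gs"
proof -
  have pos: "\<forall>g\<in>set gs. 0 < g" and len: "length gs = n" and sum: "sum_list gs = k"
    using assms by (auto simp: compositions_def)
  let ?xs = "map (partial_sum gs) [0..<n] @ [k]"
  have xs: "?xs ! j = partial_sum gs j" if "j \<le> n" for j
    using that len sum by (cases "j = n") (auto simp: nth_append partial_sum_def)
  have "card (points gs) = n"
    using arg_cong[OF sorted_list_of_set_points[OF pos], of length] len by simp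
  then have "gaps k (points gs) = map (\<lambda>j. ?xs ! Suc j - ?xs ! j) [0..<n]"
    unfolding gaps_def sorted_list_of_set_points[OF pos] len Let_def by simp
  also have "\<dots> = map (\<lambda>j. gs ! j) [0..<n]"
    using xs partial_sum_Suc len by (intro map_cong) auto
  also have "\<dots> = gs" using len map_nth[of gs] by simp
  finally show ?thesis .
qed

lemma points_in_pointed_subsets:
  assumes "gs \<in> compositions n k" "0 < n"
  shows "points gs \<in> pointed_subsets n k"
proof -
  have pos: "\<forall>g\<in>set gs. 0 < g" and len: "length gs = n" and sum: "sum_list gs = k"
    using assms by (auto simp: compositions_def)
  have "partial_sum gs j \<in> {0..<k}" if "j < n" for j
    using partial_sum_less[OF pos, of 0 j] partial_sum_less[OF pos, of j n] that len sum
    by (cases "j = 0") (auto simp: partial_sum_def)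
  moreover have "card (points gs) = n"
    using arg_cong[OF sorted_list_of_set_points[OF pos], of length] len by simp
  moreover have "0 \<in> points gs"
    using assms(2) len by (force simp: points_def partial_sum_def)
  ultimately show ?thesis
    using len by (auto simp: pointed_subsets_def points_def)
qed

lemma gaps_in_compositions:
  assumes S: "S \<in> pointed_subsets n k"
  shows "gaps k S \<in> compositions n k \<and> points (gaps k S) = S"
proof -
  define xs where "xs = sorted_list_of_set S @ [k]"
  have sub: "S \<subseteq> {0..<k}" and card: "card S = n" and zero: "0 \<in> S"
    using S by (auto simp: pointed_subsets_def)
  have "finite S" using sub finite_subset by blast
  then have sorted: "sorted_wrt (<) (sorted_list_of_set S)" and set: "set (sorted_list_of_set S) = S"
    and len: "length (sorted_list_of_set S) = n"
    using card by auto
  have "sorted_wrt (<) xs"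
    using sorted set sub by (auto simp: xs_def sorted_wrt_append)
  then have less: "xs ! i < xs ! j" if "i < j" "j \<le> n" for i j
    using that len unfolding sorted_wrt_iff_nth_less by (auto simp: xs_def)
  have first: "xs ! 0 = 0"
  proof -
    obtain i where "i < n" "xs ! i = 0"
      using zero set len by (metis in_set_conv_nth nth_append xs_def)
    moreover have "0 \<le> xs ! 0" using sub set len \<open>i < n\<close> nth_mem[of 0 "sorted_list_of_set S"]
      by (force simp: xs_def nth_append)
    ultimately show ?thesis using less[of 0 i] by (cases i) auto
  qed
  have last: "xs ! n = k" using len by (simp add: xs_def nth_append)
  define gs where "gs = gaps k S"
  have gs: "gs = map (\<lambda>j. xs ! Suc j - xs ! j) [0..<n]"
    by (simp add: gs_def gaps_def xs_def card Let_def)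
  have partial: "partial_sum gs j = xs ! j" if "j \<le> n" for j
    using partial_sum_differences[OF that, of xs] first by (simp add: gs)
  have "0 < xs ! Suc j - xs ! j" if "j < n" for j
    using less[of j "Suc j"] that by simp
  then have "gs \<in> compositions n k"
    using partial[of n] last by (auto simp: compositions_def gs partial_sum_def)
  moreover have "points gs = S"
  proof -
    have "points gs = (\<lambda>j. xs ! j) ` {..<n}" using partial by (auto simp: points_def gs)
    also have "\<dots> = (\<lambda>j. sorted_list_of_set S ! j) ` {..<n}"
      using len by (auto simp: xs_def nth_append)
    also have "\<dots> = set (sorted_list_of_set S)"
      using len by (auto simp: set_conv_nth)
    finally show ?thesis using set by simp
  qed
  ultimately show ?thesis unfolding gs_def by blast
qed

lemma bij_betw_points:
  assumes "0 < n"
  shows "bij_betw points (compositions n k) (pointed_subsets n k)"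
proof (rule bij_betw_byWitness[where f' = "gaps k"])
  show "points ` compositions n k \<subseteq> pointed_subsets n k"
    using points_in_pointed_subsets[OF _ assms] by blast
  show "gaps k ` pointed_subsets n k \<subseteq> compositions n k"
    using gaps_in_compositions by blast
  show "\<forall>gs\<in>compositions n k. gaps k (points gs) = gs"
    using gaps_points by blast
  show "\<forall>S\<in>pointed_subsets n k. points (gaps k S) = S"
    using gaps_in_compositions by blast
qed

text \<open>The index sets of the gaps between two points of a set, one for each way round the cycle.\<close>

definition cyclic_segments :: "nat \<Rightarrow> nat set set" where
  "cyclic_segments n = {I. \<exists>i j. i < j \<and> j < n \<and> (I = {i..<j} \<or> I = {..<n} - {i..<j})}"

definition admissible_gaps :: "int set \<Rightarrow> int list \<Rightarrow> bool" where
  "admissible_gaps a gs \<longleftrightarrow> (\<forall>I\<in>cyclic_segments (length gs). (\<Sum>l\<in>I. gs ! l) \<notin> a)"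

lemma F_adj_sym: "F_adj a k x y \<longleftrightarrow> F_adj a k y x"
  unfolding F_adj_def by blast

lemma F_adj_iff_distance:
  assumes "0 \<le> x" "x < y" "y < k" "\<forall>r\<in>a. 0 < r \<and> r < k"
  shows "F_adj a k x y \<longleftrightarrow> y - x \<in> a \<or> k - (y - x) \<in> a"
proof -
  have "(y - x) mod k = y - x" using assms by simp
  moreover have "(x - y) mod k = k - (y - x)"
  proof -
    have "(x - y) mod k = (x - y + k) mod k" by simp
    also have "\<dots> = x - y + k" using assms by (intro mod_pos_pos_trivial) auto
    finally show ?thesis by simp
  qed
  moreover have "r mod k = r" if "r \<in> a" for r
    using assms(4) that by (meson less_imp_le mod_pos_pos_trivial)
  ultimately show ?thesis
    unfolding F_adj_def using assms(2,4) by (metis less_irrefl)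
qed

lemma sum_complement_segment:
  assumes "gs \<in> compositions n k" "i \<le> j" "j \<le> n"
  shows "(\<Sum>l\<in>{..<n} - {i..<j}. gs ! l) = k - (partial_sum gs j - partial_sum gs i)"
proof -
  have "k = (\<Sum>l<n. gs ! l)"
    using assms(1) by (auto simp: compositions_def sum_list_sum_nth atLeast0LessThan)
  also have "\<dots> = (\<Sum>l\<in>{..<n} - {i..<j}. gs ! l) + (\<Sum>l\<in>{i..<j}. gs ! l)"
    by (rule sum.subset_diff) (use assms in auto)
  finally show ?thesis
    using partial_sum_diff[of i j gs] assms by (simp add: compositions_def)
qed

lemma F_independent_image_iff:
  fixes f :: "nat \<Rightarrow> int"
  assumes "f ` {..<n} \<subseteq> {0..<k}"
  shows "F_independent a k (f ` {..<n}) \<longleftrightarrow> (\<forall>i j. i < j \<longrightarrow> j < n \<longrightarrow> \<not> F_adj a k (f i) (f j))"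
proof -
  have "F_independent a k (f ` {..<n}) \<longleftrightarrow> (\<forall>i<n. \<forall>j<n. \<not> F_adj a k (f i) (f j))"
    using assms by (auto simp: F_independent_def F_vertices_def)
  also have "\<dots> \<longleftrightarrow> (\<forall>i j. i < j \<longrightarrow> j < n \<longrightarrow> \<not> F_adj a k (f i) (f j))"
  proof (intro iffI allI impI)
    fix i j assume H: "\<forall>i j. i < j \<longrightarrow> j < n \<longrightarrow> \<not> F_adj a k (f i) (f j)" "i < n" "j < n"
    consider "i < j" | "i = j" | "j < i" by linarith
    then show "\<not> F_adj a k (f i) (f j)"
    proof cases
      case 3
      then show ?thesis using H F_adj_sym by blast
    qed (use H in \<open>auto simp: F_adj_def\<close>)
  qed simp
  finally show ?thesis .
qed

lemma F_adj_partial_sums_iff: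
  assumes gs: "gs \<in> compositions n k" and a: "\<forall>r\<in>a. 0 < r \<and> r < k" and "i < j" "j < n"
  shows "F_adj a k (partial_sum gs i) (partial_sum gs j) \<longleftrightarrow>
    (\<Sum>l\<in>{i..<j}. gs ! l) \<in> a \<or> (\<Sum>l\<in>{..<n} - {i..<j}. gs ! l) \<in> a"
proof -
  let ?p = "partial_sum gs"
  have len: "length gs = n" and pos: "\<forall>g\<in>set gs. 0 < g"
    using gs by (auto simp: compositions_def)
  have range: "0 \<le> ?p l \<and> ?p l < k" if "l < n" for l
    using points_in_pointed_subsets[OF gs] that len
    by (auto simp: pointed_subsets_def points_def)
  have "?p i < ?p j" using partial_sum_less[OF pos \<open>i < j\<close>] assms len by simp
  then have "F_adj a k (?p i) (?p j) \<longleftrightarrow> ?p j - ?p i \<in> a \<or> k - (?p j - ?p i) \<in> a"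
    using F_adj_iff_distance[OF _ _ _ a] range[of i] range[of j] assms by simp
  then show ?thesis
    using partial_sum_diff[of i j gs] sum_complement_segment[OF gs, of i j] assms len by simp
qed

lemma F_independent_points_iff:
  assumes gs: "gs \<in> compositions n k" and "0 < n" and a: "\<forall>r\<in>a. 0 < r \<and> r < k"
  shows "F_independent a k (points gs) \<longleftrightarrow> admissible_gaps a gs"
proof -
  have len: "length gs = n" using gs by (simp add: compositions_def)
  have "F_independent a k (points gs)
      \<longleftrightarrow> (\<forall>i j. i < j \<longrightarrow> j < n \<longrightarrow> \<not> F_adj a k (partial_sum gs i) (partial_sum gs j))"
    using points_in_pointed_subsets[OF gs \<open>0 < n\<close>] F_independent_image_iff[of "partial_sum gs" n k a]
    by (simp add: pointed_subsets_def points_def len)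
  also have "\<dots> \<longleftrightarrow> (\<forall>i j. i < j \<longrightarrow> j < n \<longrightarrow>
      (\<Sum>l\<in>{i..<j}. gs ! l) \<notin> a \<and> (\<Sum>l\<in>{..<n} - {i..<j}. gs ! l) \<notin> a)"
    using F_adj_partial_sums_iff[OF gs a] by blast
  also have "\<dots> \<longleftrightarrow> admissible_gaps a gs"
    unfolding admissible_gaps_def cyclic_segments_def len by blast
  finally show ?thesis .
qed

lemma card_indep_sets_containing_0:
  assumes "0 < n" "\<forall>r\<in>a. 0 < r \<and> r < k"
  shows "card (indep_sets_containing a k n 0)
       = card {gs \<in> compositions n k. admissible_gaps a gs}"
proof -
  let ?C = "{gs \<in> compositions n k. F_independent a k (points gs)}"
  have bij: "bij_betw points (compositions n k) (pointed_subsets n k)"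
    using bij_betw_points[OF assms(1)] .
  have "indep_sets_containing a k n 0 = {S \<in> pointed_subsets n k. F_independent a k S}"
    using F_independent_subset by (auto simp: pointed_subsets_def indep_sets_containing_def)
  also have "\<dots> = points ` ?C"
    unfolding bij_betw_imp_surj_on[OF bij, symmetric] by auto
  also have "card (points ` ?C) = card ?C"
    by (intro card_image inj_on_subset[OF bij_betw_imp_inj_on[OF bij]]) auto
  also have "?C = {gs \<in> compositions n k. admissible_gaps a gs}"
    using F_independent_points_iff[OF _ assms] by blast
  finally show ?thesis .
qed

definition gap_type :: "int \<Rightarrow> int \<Rightarrow> int option" where
  "gap_type M g = (if g \<le> M then Some g else None)"

text \<open>\<open>None\<close> marks a segment containing a gap larger than \<open>M\<close>; its sum then exceeds every element of \<open>a\<close>.\<close>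

definition type_segment_sum :: "int option list \<Rightarrow> nat set \<Rightarrow> int option" where
  "type_segment_sum t I = (if \<forall>l\<in>I. t ! l \<noteq> None then Some (\<Sum>l\<in>I. the (t ! l)) else None)"

definition admissible_type :: "int set \<Rightarrow> int option list \<Rightarrow> bool" where
  "admissible_type a t \<longleftrightarrow> (\<forall>I\<in>cyclic_segments (length t). type_segment_sum t I \<notin> Some ` a)"

definition gap_types :: "int set \<Rightarrow> int \<Rightarrow> nat \<Rightarrow> int option list set" where
  "gap_types a M n = {t. length t = n \<and> set t \<subseteq> insert None (Some ` {1..M}) \<and> admissible_type a t}"

definition typed_compositions :: "int \<Rightarrow> int option list \<Rightarrow> int \<Rightarrow> int list set" where
  "typed_compositions M t k = {gs. map (gap_type M) gs = t \<and> sum_list gs = k}"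

lemma cyclic_segment_subset: "I \<in> cyclic_segments n \<Longrightarrow> I \<subseteq> {..<n}"
  by (auto simp: cyclic_segments_def)

lemma cyclic_segment_nonempty: "I \<in> cyclic_segments n \<Longrightarrow> I \<noteq> {}"
  by (auto simp: cyclic_segments_def)

lemma segment_sum_mem_iff_type:
  assumes pos: "\<forall>g\<in>set gs. 0 < g" and I: "I \<subseteq> {..<length gs}" and a: "\<forall>r\<in>a. r \<le> M"
  shows "(\<Sum>l\<in>I. gs ! l) \<in> a \<longleftrightarrow> type_segment_sum (map (gap_type M) gs) I \<in> Some ` a"
proof (cases "\<forall>l\<in>I. gs ! l \<le> M")
  case True
  then have "(\<Sum>l\<in>I. the (map (gap_type M) gs ! l)) = (\<Sum>l\<in>I. gs ! l)"
    using I by (intro sum.cong) (auto simp: gap_type_def)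
  then show ?thesis
    using True I by (auto simp: type_segment_sum_def gap_type_def)
next
  case False
  then obtain l where l: "l \<in> I" "M < gs ! l" by auto
  have "0 \<le> gs ! x" if "x \<in> I" for x
    using that I pos nth_mem[of x gs] by (auto simp: less_imp_le)
  then have "gs ! l \<le> (\<Sum>l\<in>I. gs ! l)"
    using l I by (intro member_le_sum) (auto intro: finite_subset)
  then have "(\<Sum>l\<in>I. gs ! l) \<notin> a" using l a by force
  moreover have "type_segment_sum (map (gap_type M) gs) I = None"
    using l I by (auto simp: type_segment_sum_def gap_type_def intro!: bexI[of _ l])
  ultimately show ?thesis by simp
qed

lemma admissible_gaps_iff_type:
  assumes "\<forall>g\<in>set gs. 0 < g" "\<forall>r\<in>a. r \<le> M"
  shows "admissible_gaps a gs \<longleftrightarrow> admissible_type a (map (gap_type M) gs)"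
  using segment_sum_mem_iff_type[OF assms(1) cyclic_segment_subset assms(2)]
  by (auto simp: admissible_gaps_def admissible_type_def)

lemma finite_gap_types: "finite (gap_types a M n)"
proof (rule finite_subset)
  show "gap_types a M n \<subseteq> {t. set t \<subseteq> insert None (Some ` {1..M}) \<and> length t = n}"
    by (auto simp: gap_types_def)
qed (rule finite_lists_length_eq, simp)

lemma replicate_None_in_gap_types: "replicate n None \<in> gap_types a M n"
proof -
  have "type_segment_sum (replicate n None) I = None" if I: "I \<in> cyclic_segments n" for I
  proof -
    obtain l where "l \<in> I" "l < n"
      using cyclic_segment_subset[OF I] cyclic_segment_nonempty[OF I] by blast
    then show ?thesis by (auto simp: type_segment_sum_def intro!: bexI[of _ l])
  qed
  then show ?thesis by (auto simp: gap_types_def admissible_type_def)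
qed

lemma typed_gaps_positive:
  assumes "0 \<le> M" "map (gap_type M) gs = t" "set t \<subseteq> insert None (Some ` {1..M})"
  shows "\<forall>g\<in>set gs. 0 < g"
proof
  fix g assume "g \<in> set gs"
  then have "gap_type M g \<in> insert None (Some ` {1..M})" using assms by force
  then show "0 < g" using assms(1) by (auto simp: gap_type_def split: if_splits)
qed

lemma admissible_compositions_eq_UN_typed:
  assumes "0 \<le> M" "\<forall>r\<in>a. r \<le> M"
  shows "{gs \<in> compositions n k. admissible_gaps a gs} = (\<Union>t\<in>gap_types a M n. typed_compositions M t k)"
proof (intro set_eqI iffI)
  fix gs assume "gs \<in> {gs \<in> compositions n k. admissible_gaps a gs}"
  then have "gs \<in> compositions n k" "admissible_gaps a gs" by auto
  then have "map (gap_type M) gs \<in> gap_types a M n" "gs \<in> typed_compositions M (map (gap_type M) gs) k"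
    using admissible_gaps_iff_type[OF _ assms(2)]
    by (auto simp: compositions_def gap_types_def typed_compositions_def gap_type_def)
  then show "gs \<in> (\<Union>t\<in>gap_types a M n. typed_compositions M t k)" by blast
next
  fix gs assume "gs \<in> (\<Union>t\<in>gap_types a M n. typed_compositions M t k)"
  then obtain t where t: "t \<in> gap_types a M n" "map (gap_type M) gs = t" "sum_list gs = k"
    by (auto simp: typed_compositions_def)
  then have "\<forall>g\<in>set gs. 0 < g"
    using assms(1) by (intro typed_gaps_positive) (auto simp: gap_types_def)
  then show "gs \<in> {gs \<in> compositions n k. admissible_gaps a gs}"
    using t admissible_gaps_iff_type[OF _ assms(2)]
    by (auto simp: compositions_def gap_types_def dest: arg_cong[of _ _ length])
qed

lemma finite_compositions: "finite (compositions n k)"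
proof (rule finite_subset)
  show "compositions n k \<subseteq> {gs. set gs \<subseteq> {0..k} \<and> length gs = n}"
  proof
    fix gs assume "gs \<in> compositions n k"
    then have "\<forall>g\<in>set gs. 0 < g" "sum_list gs = k" "length gs = n"
      by (auto simp: compositions_def)
    then show "gs \<in> {gs. set gs \<subseteq> {0..k} \<and> length gs = n}"
      using member_le_sum_list[of _ gs] by (auto simp: less_imp_le)
  qed
qed (rule finite_lists_length_eq, simp)

lemma card_admissible_compositions:
  assumes "0 \<le> M" "\<forall>r\<in>a. r \<le> M"
  shows "card {gs \<in> compositions n k. admissible_gaps a gs}
       = (\<Sum>t\<in>gap_types a M n. card (typed_compositions M t k))"
  unfolding admissible_compositions_eq_UN_typed[OF assms]
proof (rule card_UN_disjoint[OF finite_gap_types])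
  show "\<forall>t\<in>gap_types a M n. finite (typed_compositions M t k)"
  proof
    fix t assume "t \<in> gap_types a M n"
    then have "typed_compositions M t k \<subseteq> compositions n k"
      using admissible_compositions_eq_UN_typed[OF assms, of n k] by blast
    then show "finite (typed_compositions M t k)"
      using finite_compositions by (rule finite_subset)
  qed
  show "\<forall>t\<in>gap_types a M n. \<forall>t'\<in>gap_types a M n. t \<noteq> t' \<longrightarrow>
      typed_compositions M t k \<inter> typed_compositions M t' k = {}"
    by (auto simp: typed_compositions_def)
qed

text \<open>The \<open>None\<close> slots receive \<open>M + 1\<close> plus the successive entries of \<open>xs\<close>; only lists \<open>xs\<close> of
  length \<open>count_list t None\<close> are meant, otherwise \<open>hd\<close> and \<open>tl\<close> produce junk.\<close>

fun fill_type :: "int \<Rightarrow> int option list \<Rightarrow> nat list \<Rightarrow> int list" where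
  "fill_type M [] xs = []"
| "fill_type M (Some v # t) xs = v # fill_type M t xs"
| "fill_type M (None # t) xs = (M + 1 + int (hd xs)) # fill_type M t (tl xs)"

definition fixed_sum :: "int option list \<Rightarrow> int" where
  "fixed_sum t = (\<Sum>x\<leftarrow>t. case x of None \<Rightarrow> 0 | Some v \<Rightarrow> v)"

lemma map_gap_type_fill_type:
  "\<forall>v. Some v \<in> set t \<longrightarrow> v \<le> M \<Longrightarrow> map (gap_type M) (fill_type M t xs) = t"
  by (induction M t xs rule: fill_type.induct) (auto simp: gap_type_def)

lemma sum_list_fill_type:
  "length xs = count_list t None \<Longrightarrow>
    sum_list (fill_type M t xs) = fixed_sum t + int (count_list t None) * (M + 1) + int (sum_list xs)"
proof (induction M t xs rule: fill_type.induct)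
  case (3 M t xs)
  then show ?case by (cases xs) (auto simp: fixed_sum_def algebra_simps)
qed (auto simp: fixed_sum_def)

lemma fill_type_surj:
  "map (gap_type M) gs = t \<Longrightarrow> \<exists>xs. length xs = count_list t None \<and> fill_type M t xs = gs"
proof (induction gs arbitrary: t)
  case (Cons g gs)
  then obtain xs where xs: "length xs = count_list (map (gap_type M) gs) None"
      "fill_type M (map (gap_type M) gs) xs = gs"
    by blast
  show ?case
  proof (cases "g \<le> M")
    case True
    then have "gap_type M g = Some g" by (simp add: gap_type_def)
    then show ?thesis using Cons.prems xs by auto
  next
    case False
    then have "gap_type M g = None" by (simp add: gap_type_def)
    then show ?thesis
      using Cons.prems xs False by (auto intro!: exI[of _ "nat (g - M - 1) # xs"])
  qed
qed simp

lemma fill_type_inj: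
  "length xs = count_list t None \<Longrightarrow> length ys = count_list t None \<Longrightarrow>
    fill_type M t xs = fill_type M t ys \<Longrightarrow> xs = ys"
proof (induction M t xs arbitrary: ys rule: fill_type.induct)
  case (1 M xs)
  then show ?case by simp
next
  case (2 M v t xs)
  from "2.prems" have "length xs = count_list t None" "length ys = count_list t None"
    "fill_type M t xs = fill_type M t ys"
    by simp_all
  then show ?case by (rule "2.IH")
next
  case (3 M t xs)
  have "length xs = Suc (count_list t None)" "length ys = Suc (count_list t None)"
    using "3.prems" by simp_all
  then obtain x xs' y ys' where xs: "xs = x # xs'" and ys: "ys = y # ys'"
    by (auto simp: length_Suc_conv)
  from "3.prems" have "length xs' = count_list t None" "length ys' = count_list t None"
    "fill_type M t xs' = fill_type M t ys'" and "x = y"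
    by (simp_all add: xs ys)
  with "3.IH"[of ys'] show ?case by (simp add: xs ys)
qed

lemma card_typed_compositions:
  assumes "\<forall>v. Some v \<in> set t \<longrightarrow> v \<le> M"
    and c: "c = fixed_sum t + int (count_list t None) * (M + 1)" and "c \<le> k"
  shows "card (typed_compositions M t k)
       = (nat (k - c) + count_list t None - 1) choose nat (k - c)"
proof -
  let ?X = "{xs. length xs = count_list t None \<and> sum_list xs = nat (k - c)}"
  have "typed_compositions M t k = fill_type M t ` ?X"
  proof (intro set_eqI iffI)
    fix gs assume "gs \<in> typed_compositions M t k"
    then obtain xs where "length xs = count_list t None" "fill_type M t xs = gs" "sum_list gs = k"
      using fill_type_surj by (auto simp: typed_compositions_def)
    then show "gs \<in> fill_type M t ` ?X"
      using sum_list_fill_type[of xs t M] c by force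
  qed (use assms map_gap_type_fill_type sum_list_fill_type in \<open>auto simp: typed_compositions_def\<close>)
  moreover have "inj_on (fill_type M t) ?X"
    using fill_type_inj by (auto intro: inj_onI)
  ultimately show ?thesis
    by (simp add: card_image card_length_sum_list)
qed

definition binomial_poly :: "nat \<Rightarrow> 'a::field_char_0 poly" where
  "binomial_poly j = smult (inverse (fact j)) (\<Prod>i<j. [:- of_nat i, 1:])"

lemma poly_binomial_poly: "poly (binomial_poly j) x = x gchoose j"
  by (simp add: binomial_poly_def poly_prod gbinomial_prod_rev atLeast0LessThan field_simps)

lemma degree_binomial_poly: "degree (binomial_poly j :: 'a::field_char_0 poly) = j"
proof -
  have "degree (\<Prod>i<j. [:- of_nat i, 1::'a:]) = (\<Sum>i<j. degree [:- of_nat i, 1::'a:])"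
    by (rule degree_prod_eq_sum_degree) auto
  then show ?thesis by (simp add: binomial_poly_def)
qed

lemma binomial_poly_nonzero: "binomial_poly j \<noteq> (0 :: 'a::field_char_0 poly)"
proof
  assume "binomial_poly j = (0 :: 'a poly)"
  then have "(of_nat j gchoose j :: 'a) = 0"
    using poly_binomial_poly[of j "of_nat j :: 'a"] by simp
  then show False
    using binomial_gbinomial[of j j, where 'a = 'a] by simp
qed

lemma degree_sum_dominant:
  fixes f :: "'a \<Rightarrow> 'b::comm_ring_1 poly"
  assumes "finite A" "x \<in> A" "f x \<noteq> 0" "\<forall>y\<in>A - {x}. f y = 0 \<or> degree (f y) < degree (f x)"
  shows "degree (\<Sum>y\<in>A. f y) = degree (f x) \<and> (\<Sum>y\<in>A. f y) \<noteq> 0"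
proof -
  have "coeff (f y) (degree (f x)) = 0" if "y \<in> A - {x}" for y
    using assms(4)[rule_format, OF that] coeff_eq_0[of "f y" "degree (f x)"] by auto
  then have "coeff (\<Sum>y\<in>A. f y) (degree (f x)) = lead_coeff (f x)"
    unfolding coeff_sum by (simp add: sum.remove[OF assms(1,2)] sum.neutral)
  then have "coeff (\<Sum>y\<in>A. f y) (degree (f x)) \<noteq> 0"
    using assms(3) by simp
  moreover have "degree (f y) \<le> degree (f x)" if "y \<in> A" for y
    using assms(4)[rule_format, of y] that by (cases "y = x") auto
  then have "degree (\<Sum>y\<in>A. f y) \<le> degree (f x)"
    by (intro degree_sum_le[OF assms(1)])
  ultimately show ?thesis
    using le_degree by fastforce
qed

lemma card_typed_compositions_eventually_poly:
  assumes "\<forall>v. Some v \<in> set t \<longrightarrow> v \<le> M"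
  shows "\<exists>P :: rat poly.
           (\<forall>\<^sub>F k in at_top. of_nat (card (typed_compositions M t k)) = poly P (of_int k))
         \<and> degree P = count_list t None - 1 \<and> (P = 0 \<longleftrightarrow> count_list t None = 0)"
proof -
  define c where "c = fixed_sum t + int (count_list t None) * (M + 1)"
  have card: "card (typed_compositions M t k) = (nat (k - c) + count_list t None - 1) choose nat (k - c)"
    if "c \<le> k" for k
    using card_typed_compositions[OF assms c_def that] .
  show ?thesis
  proof (cases "count_list t None")
    case 0
    have "card (typed_compositions M t k) = 0" if "c + 1 \<le> k" for k
      using card[of k] that 0 by (simp add: binomial_eq_0)
    then have "\<forall>\<^sub>F k in at_top. of_nat (card (typed_compositions M t k)) = poly (0 :: rat poly) (of_int k)"
      by (auto simp: eventually_at_top_linorder)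
    then show ?thesis using 0 by auto
  next
    case (Suc j)
    define P :: "rat poly" where "P = binomial_poly j \<circ>\<^sub>p [:of_int (int j - c), 1:]"
    have "of_nat (card (typed_compositions M t k)) = poly P (of_int k)" if "c \<le> k" for k
    proof -
      have "card (typed_compositions M t k) = (nat (k - c) + j) choose j"
        using card[OF that] Suc binomial_symmetric[of j "nat (k - c) + j"] by simp
      also have "rat_of_nat \<dots> = of_int (k - c + int j) gchoose j"
        using that by (simp add: binomial_gbinomial)
      finally show ?thesis
        by (simp add: P_def poly_pcompose poly_binomial_poly algebra_simps)
    qed
    then have "\<forall>\<^sub>F k in at_top. of_nat (card (typed_compositions M t k)) = poly P (of_int k)"
      by (auto simp: eventually_at_top_linorder)
    moreover have "degree P = j"
      by (simp add: P_def degree_pcompose degree_binomial_poly)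
    moreover have "P \<noteq> 0"
      using binomial_poly_nonzero pcompose_eq_0_iff[of "[:of_int (int j - c), 1:]" "binomial_poly j"]
      by (auto simp: P_def)
    ultimately show ?thesis using Suc by auto
  qed
qed

lemma count_list_less_length:
  assumes "t \<noteq> replicate (length t) x"
  shows "count_list t x < length t"
proof -
  obtain y where "y \<in> set t" "y \<noteq> x"
    using assms replicate_length_same[of t x] by force
  then have "length (filter ((=) x) t) < length t"
    by (intro length_filter_less) auto
  then show ?thesis by (simp add: count_list_eq_length_filter)
qed

lemma card_indep_sets_containing_0_eq_sum_types:
  assumes "0 < n" "\<forall>r\<in>a. 0 < r" "0 \<le> M" "\<forall>r\<in>a. r \<le> M" "M < k"
  shows "card (indep_sets_containing a k n 0) = (\<Sum>t\<in>gap_types a M n. card (typed_compositions M t k))"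
proof -
  have "\<forall>r\<in>a. 0 < r \<and> r < k" using assms(2,4,5) by fastforce
  then show ?thesis
    using card_indep_sets_containing_0[OF assms(1)] card_admissible_compositions[OF assms(3,4)] by simp
qed

lemma card_indep_sets_containing_0_eventually_poly:
  assumes "finite a" "\<forall>r\<in>a. 0 < r" "0 < n"
  shows "\<exists>Q :: rat poly. degree Q = n - 1 \<and> Q \<noteq> 0 \<and>
    (\<forall>\<^sub>F k in at_top. of_nat (card (indep_sets_containing a k n 0)) = poly Q (of_int k))"
proof -
  define M where "M = Max (insert 1 a)"
  have M: "0 \<le> M" "\<forall>r\<in>a. r \<le> M"
    using assms(1) by (auto simp: M_def Max_ge_iff)
  define T where "T = gap_types a M n"
  have ex: "\<forall>t\<in>T. \<exists>P :: rat poly.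
      (\<forall>\<^sub>F k in at_top. of_nat (card (typed_compositions M t k)) = poly P (of_int k))
    \<and> degree P = count_list t None - 1 \<and> (P = 0 \<longleftrightarrow> count_list t None = 0)"
    by (intro ballI card_typed_compositions_eventually_poly) (auto simp: T_def gap_types_def)
  obtain P :: "int option list \<Rightarrow> rat poly" where P: "\<forall>t\<in>T.
      (\<forall>\<^sub>F k in at_top. of_nat (card (typed_compositions M t k)) = poly (P t) (of_int k))
    \<and> degree (P t) = count_list t None - 1 \<and> (P t = 0 \<longleftrightarrow> count_list t None = 0)"
    using bchoice[OF ex] by (rule exE)
  have "finite T" by (simp add: T_def finite_gap_types)
  have t0: "replicate n None \<in> T" by (simp add: T_def replicate_None_in_gap_types)
  have "count_list (replicate n (None :: int option)) None = n"
    by (simp add: count_list_eq_length_filter)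
  then have P0: "degree (P (replicate n None)) = n - 1" "P (replicate n None) \<noteq> 0"
    using P t0 assms(3) by auto
  have "P t = 0 \<or> degree (P t) < n - 1" if "t \<in> T - {replicate n None}" for t
  proof -
    have "count_list t None < n"
      using count_list_less_length[of t None] that by (auto simp: T_def gap_types_def)
    then show ?thesis using P that by (cases "count_list t None") auto
  qed
  then have "degree (\<Sum>t\<in>T. P t) = n - 1 \<and> (\<Sum>t\<in>T. P t) \<noteq> 0"
    using degree_sum_dominant[OF \<open>finite T\<close> t0, of P] P0 by simp
  moreover have "\<forall>\<^sub>F k in at_top.
      of_nat (card (indep_sets_containing a k n 0)) = poly (\<Sum>t\<in>T. P t) (of_int k)"
  proof -
    have "\<forall>\<^sub>F k in at_top. M < k \<and>
        (\<forall>t\<in>T. of_nat (card (typed_compositions M t k)) = poly (P t) (of_int k))"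
      using P \<open>finite T\<close> by (intro eventually_conj eventually_gt_at_top eventually_ball_finite) auto
    then show ?thesis
      by (rule eventually_mono)
        (simp add: card_indep_sets_containing_0_eq_sum_types[OF assms(3,2) M] T_def poly_sum)
  qed
  ultimately show ?thesis by blast
qed

lemma num_indep_0: "num_indep a k 0 = 1"
proof -
  have "{S. F_independent a k S \<and> card S = 0} = {{}}"
  proof (intro set_eqI iffI)
    fix S assume "S \<in> {S. F_independent a k S \<and> card S = 0}"
    then have "finite S" "card S = 0"
      using finite_subset[OF F_independent_subset] by auto
    then show "S \<in> {{}}" by simp
  qed (simp add: F_independent_def F_vertices_def)
  then show ?thesis by (simp add: num_indep_def)
qed

theorem lemma3p3:
  fixes a :: "int set" and n :: nat
  assumes "finite a" and "\<forall>r\<in>a. r > 0"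
  shows "\<exists>P :: rat poly. \<exists>N :: int. degree P = n \<and>
           (\<forall>k::int. k \<ge> N \<and> k > 0 \<longrightarrow> of_nat (num_indep a k n) = poly P (of_int k))"
proof (cases "n = 0")
  case True
  then show ?thesis by (intro exI[of _ "[:1:]"] exI[of _ 0]) (simp add: num_indep_0)
next
  case False
  then obtain Q :: "rat poly" where Q: "degree Q = n - 1" "Q \<noteq> 0"
    and "\<forall>\<^sub>F k in at_top.
      of_nat (card (indep_sets_containing a k n 0)) = poly Q (of_int k)"
    using card_indep_sets_containing_0_eventually_poly[OF assms] by blast
  then obtain N where N: "\<forall>k\<ge>N.
      of_nat (card (indep_sets_containing a k n 0)) = poly Q (of_int k)"
    by (auto simp: eventually_at_top_linorder)
  define P where "P = smult (1 / of_nat n) (pCons 0 Q)"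
  have "of_nat (num_indep a k n) = poly P (of_int k)" if "N \<le> k" "0 < k" for k
  proof -
    have "of_nat n * of_nat (num_indep a k n) = (of_int k * poly Q (of_int k) :: rat)"
      using arg_cong[OF num_indep_rotation[of n a k], of rat_of_nat] N that by simp
    then show ?thesis using False by (simp add: P_def field_simps)
  qed
  moreover have "degree P = n" using Q False by (simp add: P_def)
  ultimately show ?thesis by (intro exI[of _ P] exI[of _ N]) simp
qed

end
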